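(* Let $A,B\in\mathbb{R}^{n\times n}$ be symmetric, $a,b\in\mathbb{R}^n$, $c,d\in\mathbb{R}$, $\alpha\le\beta$ real, $f(x)=x^TAx+2a^Tx+c$, $h(x)=x^TBx+2b^Tx+d$. Suppose $B\neq 0$ and there exist $\widehat{x}\in\mathbb{R}^n$ and a symmetric $\widehat{X}$ with $\widehat{X}-\widehat{x}\widehat{x}^T$ positive definite and $\alpha<B\bullet\widehat{X}+2b^T\widehat{x}+d<\beta$. Then the problem $\inf\{f(x): \alpha\le h(x)\le\beta\}$ is bounded below (i.e. has optimal value $>-\infty$) if and only if there exist $\mu,s\in\mathbb{R}$ with $\begin{bmatrix}A+\mu B & a+\mu b\\ a^T+\mu b^T & s\end{bmatrix}\succeq 0$ (i.e. the Lagrangian dual problem $\sup\{c+\mu d-\mu_-\beta+\mu_+\alpha-s : \mu,s\in\mathbb{R},\ \begin{bmatrix}A+\mu B & a+\mu b\\ a^T+\mu b^T & s\end{bmatrix}\succeq 0\}$, with $\mu_+=\max\{\mu,0\}$, $\mu_-=-\min\{\mu,0\}$, is feasible).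
   Context: $M\succeq 0$ means $M$ is positive semidefinite; $M\bullet N=\sum_{i,j}m_{ij}n_{ij}$. *)

theory Defs
  imports "HOL-Analysis.Analysis"
begin

definition symmetric_mat :: "real^'n^'n \<Rightarrow> bool" where
  "symmetric_mat M \<longleftrightarrow> transpose M = M"

definition psd :: "real^'m^'m \<Rightarrow> bool" where
  "psd M \<longleftrightarrow> symmetric_mat M \<and> (\<forall>x. 0 \<le> x \<bullet> (M *v x))"

definition pd :: "real^'m^'m \<Rightarrow> bool" where
  "pd M \<longleftrightarrow> symmetric_mat M \<and> (\<forall>x. x \<noteq> 0 \<longrightarrow> 0 < x \<bullet> (M *v x))"

definition frob :: "real^'n^'n \<Rightarrow> real^'n^'n \<Rightarrow> real" where
  "frob M N = (\<Sum>i\<in>UNIV. \<Sum>j\<in>UNIV. M $ i $ j * N $ i $ j)"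

definition outer :: "real^'n \<Rightarrow> real^'n \<Rightarrow> real^'n^'n" where
  "outer x y = (\<chi> i j. x $ i * y $ j)"

text \<open>The (n+1)x(n+1) block matrix [[M, v],[v^T, s]], index None = the extra last row/column.\<close>
definition block_mat :: "real^'n^'n \<Rightarrow> real^'n \<Rightarrow> real \<Rightarrow> real^('n option)^('n option)" where
  "block_mat M v s = (\<chi> i j. case (i, j) of
      (Some i', Some j') \<Rightarrow> M $ i' $ j'
    | (Some i', None) \<Rightarrow> v $ i'
    | (None, Some j') \<Rightarrow> v $ j'
    | (None, None) \<Rightarrow> s)"

end

theory Submission
  imports Defs
begin

text \<open>
  Along a segment \<open>x + s (y - x)\<close> both quadratic functions restrict to univariate quadratics, and one
  can move along the segment so that \<open>h\<close> takes the convex combination of its endpoint values while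
  \<open>f\<close> stays below the convex combination of its endpoint values (choosing the right root of a
  quadratic equation). When \<open>h\<close> is affine on the segment this fails, but perturbing an endpoint
  in a direction where the form of \<open>B \<noteq> 0\<close> does not vanish restores it up to an arbitrarily small
  error. So the set \<open>{(f x + r, h x) | r > 0}\<close> is convex. If \<open>f \<ge> L\<close> on the slab
  \<open>\<alpha> \<le> h \<le> \<beta>\<close>, this set misses \<open>(-\<infinity>, L) \<times> [\<alpha>, \<beta>]\<close>, and a separating line gives a multiplier
  \<open>\<mu>\<close> with \<open>f + \<mu> h\<close> bounded below; the Slater point, through \<open>B \<bullet> P \<le> 0\<close> for positive
  semidefinite \<open>P\<close> and negative semidefinite \<open>B\<close>, shows that \<open>h\<close> takes values on both sides of
  the slab, which rules out a vertical line. Finally, \<open>f + \<mu> h \<ge> c + \<mu> d - s\<close> everywhere is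
  exactly positive semidefiniteness of the homogenised block matrix.
\<close>

definition quad :: "real^'n^'n \<Rightarrow> real^'n \<Rightarrow> real \<Rightarrow> real^'n \<Rightarrow> real" where
  "quad M m c x = x \<bullet> (M *v x) + 2 * (m \<bullet> x) + c"

lemma quad_add_scaleR:
  "quad M m c (x + s *\<^sub>R v) =
     quad M m c x + s * (v \<bullet> (M *v x) + x \<bullet> (M *v v) + 2 * (m \<bullet> v)) + s\<^sup>2 * (v \<bullet> (M *v v))"
  unfolding quad_def by (simp add: algebra_simps inner_add_left inner_add_right power2_eq_square)

lemma quad_scaleR: "quad M m c (s *\<^sub>R v) = (v \<bullet> (M *v v)) * s\<^sup>2 + 2 * (m \<bullet> v) * s + c"
  using quad_add_scaleR[of M m c 0 s v] by (simp add: quad_def algebra_simps)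

lemma quad_uminus: "quad (- M) (- m) (- c) x = - quad M m c x"
  using matrix_vector_mult_diff_rdistrib[of 0 M x] by (simp add: quad_def)

lemma continuous_quad: "isCont (quad M m c) x"
  unfolding quad_def by (intro continuous_intros)

lemma quadratic_nonneg_imp_leading_nonneg:
  fixes p q r :: real
  assumes nonneg: "\<And>s. 0 \<le> p * s\<^sup>2 + q * s + r"
  shows "0 \<le> p"
proof (rule ccontr)
  assume "\<not> 0 \<le> p"
  then have p: "p < 0" by simp
  define s where "s = max 1 ((\<bar>q\<bar> + \<bar>r\<bar> + 1) / - p)"
  have s1: "1 \<le> s" unfolding s_def by simp
  have "\<bar>q\<bar> + \<bar>r\<bar> + 1 = - p * ((\<bar>q\<bar> + \<bar>r\<bar> + 1) / - p)"
    using p by simp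
  also have "\<dots> \<le> - p * s"
    using p by (intro mult_left_mono) (auto simp: s_def)
  finally have "\<bar>q\<bar> + \<bar>r\<bar> + 1 \<le> - p * s" .
  then have "s * (\<bar>q\<bar> + \<bar>r\<bar> + 1) \<le> s * (- p * s)"
    using s1 by (intro mult_left_mono) auto
  moreover have "q * s \<le> \<bar>q\<bar> * s"
    using s1 by (intro mult_right_mono) auto
  moreover have "r \<le> \<bar>r\<bar> * s"
    using s1 by (metis abs_ge_self abs_ge_zero mult.right_neutral mult_left_mono order_trans)
  ultimately have "p * s\<^sup>2 + q * s + r \<le> - s"
    by (simp add: power2_eq_square algebra_simps)
  then show False using nonneg[of s] s1 by linarith
qed

lemma quadratic_root_with_sign:
  fixes p q r k :: real
  assumes p: "p \<noteq> 0" and pr: "p * r \<le> 0"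
  shows "\<exists>u. p * u\<^sup>2 + q * u + r = 0 \<and> k * u \<le> 0"
proof -
  define D where "D = q\<^sup>2 - 4 * p * r"
  have "0 \<le> D" using pr zero_le_power2[of q] unfolding D_def by linarith
  then have sq: "(sqrt D)\<^sup>2 = D" by simp
  define u1 where "u1 = (- q + sqrt D) / (2 * p)"
  define u2 where "u2 = (- q - sqrt D) / (2 * p)"
  have roots: "p * u1\<^sup>2 + q * u1 + r = 0" "p * u2\<^sup>2 + q * u2 + r = 0"
    using p sq unfolding u1_def u2_def D_def by (simp_all add: field_simps power2_eq_square)
  \<comment> \<open>Vieta: the product of the roots is \<open>r / p \<le> 0\<close>, so one of \<open>k u1\<close>, \<open>k u2\<close> is \<open>\<le> 0\<close>\<close>
  have "(2 * p)\<^sup>2 * ((k * u1) * (k * u2)) = k\<^sup>2 * (4 * p * r)"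
    using p sq unfolding u1_def u2_def D_def by (simp add: field_simps power2_eq_square)
  also have "\<dots> \<le> 0" using pr by (simp add: mult_nonneg_nonpos)
  finally have "(k * u1) * (k * u2) \<le> 0"
    using p by (simp add: mult_le_0_iff)
  then have "k * u1 \<le> 0 \<or> k * u2 \<le> 0"
    by (metis mult_pos_pos not_le)
  then show ?thesis using roots by blast
qed

lemma quad_lagrangian:
  "quad (A + \<mu> *\<^sub>R B) (a + \<mu> *\<^sub>R b) s x = quad A a c x + \<mu> * quad B b d x + (s - c - \<mu> * d)"
  by (simp add: quad_def matrix_vector_mult_add_rdistrib scaleR_matrix_vector_assoc[symmetric]
      inner_add_left inner_add_right algebra_simps)

section \<open>Hidden convexity of a pair of quadratic functions\<close>

lemma quadratic_pair_convex_combination: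
  fixes F1 F2 H1 H2 t :: real
  assumes t: "0 \<le> t" "t \<le> 1" and nondeg: "H2 \<noteq> 0 \<or> 0 \<le> F2"
  shows "\<exists>s. s * H1 + s\<^sup>2 * H2 = t * (H1 + H2) \<and> s * F1 + s\<^sup>2 * F2 \<le> t * (F1 + F2)"
proof (cases "H2 = 0")
  case True
  have "t\<^sup>2 * F2 \<le> t * F2"
    using t True nondeg by (intro mult_right_mono) (auto simp: power2_eq_square mult_left_le)
  then show ?thesis using True by (intro exI[of _ t]) (simp add: algebra_simps)
next
  case False
  have "H2 * (H2 * (t\<^sup>2 - t)) \<le> 0"
    using t by (simp add: mult.assoc[symmetric] mult_nonneg_nonpos power2_eq_square mult_left_le)
  \<comment> \<open>\<open>s = t + u\<close> solves the equation for \<open>H\<close> iff \<open>u\<close> solves this one; of its two roots, whose product is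
    \<open>t\<^sup>2 - t \<le> 0\<close>, take the one on the side where the defect of \<open>F\<close> is nonpositive\<close>
  then obtain u where u: "H2 * u\<^sup>2 + (H1 + 2 * H2 * t) * u + H2 * (t\<^sup>2 - t) = 0"
    and sign: "(F1 - F2 * H1 / H2) * u \<le> 0"
    using quadratic_root_with_sign[OF False] by blast
  have "u\<^sup>2 + 2 * t * u + t\<^sup>2 - t = - (H1 / H2) * u"
    using u False by (simp add: field_simps power2_eq_square)
  then have "F2 * (u\<^sup>2 + 2 * t * u + t\<^sup>2 - t) = - (F2 * H1 / H2) * u"
    by simp
  then have "(t + u) * F1 + (t + u)\<^sup>2 * F2 = t * (F1 + F2) + (F1 - F2 * H1 / H2) * u"
    by (simp add: algebra_simps power2_eq_square)
  moreover have "(t + u) * H1 + (t + u)\<^sup>2 * H2 = t * (H1 + H2)"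
    using u by (simp add: algebra_simps power2_eq_square)
  ultimately show ?thesis using sign by (intro exI[of _ "t + u"]) simp
qed

lemma quad_pair_convex_combination:
  assumes t: "0 \<le> t" "t \<le> 1"
    and nondeg: "(y - x) \<bullet> (B *v (y - x)) \<noteq> 0 \<or> 0 \<le> (y - x) \<bullet> (A *v (y - x))"
  shows "\<exists>z. quad B b d z = (1 - t) * quad B b d x + t * quad B b d y \<and>
             quad A a c z \<le> (1 - t) * quad A a c x + t * quad A a c y"
proof -
  define v where "v = y - x"
  define slope where "slope M m = v \<bullet> (M *v x) + x \<bullet> (M *v v) + 2 * (m \<bullet> v)" for M m
  have line: "quad M m c (x + s *\<^sub>R v) = quad M m c x + s * slope M m + s\<^sup>2 * (v \<bullet> (M *v v))"
    for M m c s unfolding slope_def by (rule quad_add_scaleR)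
  have y: "y = x + 1 *\<^sub>R v" unfolding v_def by simp
  obtain s where
    "s * slope B b + s\<^sup>2 * (v \<bullet> (B *v v)) = t * (slope B b + v \<bullet> (B *v v))"
    "s * slope A a + s\<^sup>2 * (v \<bullet> (A *v v)) \<le> t * (slope A a + v \<bullet> (A *v v))"
    using quadratic_pair_convex_combination[OF t] nondeg unfolding v_def by blast
  then show ?thesis
    unfolding y line by (intro exI[of _ "x + s *\<^sub>R v"]) (simp add: line algebra_simps)
qed

definition approx_joint_convex :: "('a \<Rightarrow> real) \<Rightarrow> ('a \<Rightarrow> real) \<Rightarrow> bool" where
  "approx_joint_convex f h \<longleftrightarrow>
     (\<forall>x y t e. 0 \<le> t \<and> t \<le> 1 \<and> 0 < e \<longrightarrow>
        (\<exists>z. h z = (1 - t) * h x + t * h y \<and> f z \<le> (1 - t) * f x + t * f y + e))"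

lemma quad_pair_convex_combination_approx_by_limit:
  fixes Y :: "real \<Rightarrow> real^'n"
  assumes Y: "(Y \<longlongrightarrow> y) (at 0)"
    and nondeg: "\<forall>\<^sub>F \<epsilon> in at 0. (Y \<epsilon> - x) \<bullet> (B *v (Y \<epsilon> - x)) \<noteq> 0"
    and hxy: "quad B b d x \<noteq> quad B b d y" and t: "0 < t" "t < 1" and e: "0 < e"
  shows "\<exists>z. quad B b d z = (1 - t) * quad B b d x + t * quad B b d y \<and>
             quad A a c z \<le> (1 - t) * quad A a c x + t * quad A a c y + e"
proof -
  define h where "h = quad B b d"
  define f where "f = quad A a c"
  \<comment> \<open>the weight that puts \<open>h\<close> at the target value on the segment from \<open>x\<close> to \<open>Y \<epsilon>\<close>\<close>
  define T where "T \<epsilon> = t * (h y - h x) / (h (Y \<epsilon>) - h x)" for \<epsilon>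
  have hY: "((\<lambda>\<epsilon>. h (Y \<epsilon>)) \<longlongrightarrow> h y) (at 0)" and fY: "((\<lambda>\<epsilon>. f (Y \<epsilon>)) \<longlongrightarrow> f y) (at 0)"
    unfolding h_def f_def using Y by (auto intro: isCont_tendsto_compose continuous_quad)
  have hxy': "h y - h x \<noteq> 0" using hxy by (simp add: h_def)
  have "(T \<longlongrightarrow> t * (h y - h x) / (h y - h x)) (at 0)"
    unfolding T_def using hY hxy' by (intro tendsto_intros) auto
  then have T: "(T \<longlongrightarrow> t) (at 0)" using hxy' by simp
  have "((\<lambda>\<epsilon>. (1 - T \<epsilon>) * f x + T \<epsilon> * f (Y \<epsilon>)) \<longlongrightarrow> (1 - t) * f x + t * f y) (at 0)"
    by (intro tendsto_intros T fY)
  then have "\<forall>\<^sub>F \<epsilon> in at 0. (1 - T \<epsilon>) * f x + T \<epsilon> * f (Y \<epsilon>) < (1 - t) * f x + t * f y + e"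
    using e by (intro order_tendstoD) auto
  moreover have "\<forall>\<^sub>F \<epsilon> in at 0. h (Y \<epsilon>) - h x \<noteq> 0"
    using hY hxy' by (intro tendsto_imp_eventually_ne) (auto intro: tendsto_intros)
  moreover have "\<forall>\<^sub>F \<epsilon> in at 0. 0 < T \<epsilon> \<and> T \<epsilon> < 1"
    using T t by (intro eventually_conj order_tendstoD)
  ultimately have "\<forall>\<^sub>F \<epsilon> in at 0. (1 - T \<epsilon>) * f x + T \<epsilon> * f (Y \<epsilon>) < (1 - t) * f x + t * f y + e \<and>
      h (Y \<epsilon>) - h x \<noteq> 0 \<and> (0 < T \<epsilon> \<and> T \<epsilon> < 1) \<and> (Y \<epsilon> - x) \<bullet> (B *v (Y \<epsilon> - x)) \<noteq> 0"
    using nondeg by (simp add: eventually_conj_iff)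
  then obtain \<epsilon> where close: "(1 - T \<epsilon>) * f x + T \<epsilon> * f (Y \<epsilon>) < (1 - t) * f x + t * f y + e"
    and ne: "h (Y \<epsilon>) - h x \<noteq> 0" and T01: "0 < T \<epsilon>" "T \<epsilon> < 1"
    and nd: "(Y \<epsilon> - x) \<bullet> (B *v (Y \<epsilon> - x)) \<noteq> 0"
    using eventually_happens'[OF trivial_limit_at] by blast
  obtain z where "h z = (1 - T \<epsilon>) * h x + T \<epsilon> * h (Y \<epsilon>)"
    and fz: "f z \<le> (1 - T \<epsilon>) * f x + T \<epsilon> * f (Y \<epsilon>)"
    using quad_pair_convex_combination[of "T \<epsilon>" "Y \<epsilon>" x B A b d a c] T01 nd
    unfolding h_def f_def by auto
  moreover have "T \<epsilon> * (h (Y \<epsilon>) - h x) = t * (h y - h x)"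
    unfolding T_def using ne by simp
  ultimately have "h z = (1 - t) * h x + t * h y"
    by (simp add: algebra_simps)
  with fz close show ?thesis unfolding h_def f_def by (intro exI[of _ z]) auto
qed

lemma symmetric_mat_inner_commute:
  assumes "symmetric_mat B"
  shows "u \<bullet> (B *v v) = v \<bullet> (B *v u)"
  using assms dot_lmul_matrix[of u B v] vector_transpose_matrix[of u B]
  by (simp add: symmetric_mat_def inner_commute)

lemma symmetric_nonzero_imp_anisotropic:
  assumes "symmetric_mat B" "B \<noteq> 0"
  shows "\<exists>w. w \<bullet> (B *v w) \<noteq> 0"
proof (rule ccontr)
  assume "\<not> ?thesis"
  then have iso: "\<And>w. w \<bullet> (B *v w) = 0" by blast
  \<comment> \<open>polarization\<close>
  have "u \<bullet> (B *v v) = 0" for u v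
    using iso[of "u + v"] iso[of u] iso[of v] symmetric_mat_inner_commute[OF assms(1), of u v]
    by (simp add: matrix_vector_right_distrib inner_add_left inner_add_right)
  then have "B *v v = 0 *v v" for v
    using inner_eq_zero_iff[of "B *v v"] by simp
  then show False using assms(2) matrix_eq by blast
qed

lemma isotropic_perturbation_eventually_anisotropic:
  fixes B :: "real^'n^'n"
  assumes v: "v \<bullet> (B *v v) = 0" and w: "w \<bullet> (B *v w) \<noteq> 0"
  shows "\<forall>\<^sub>F \<epsilon> in at 0. (v + \<epsilon> *\<^sub>R w) \<bullet> (B *v (v + \<epsilon> *\<^sub>R w)) \<noteq> 0"
proof -
  define c1 where "c1 = w \<bullet> (B *v v) + v \<bullet> (B *v w)"
  have expand: "(v + \<epsilon> *\<^sub>R w) \<bullet> (B *v (v + \<epsilon> *\<^sub>R w)) = \<epsilon> * (c1 + \<epsilon> * (w \<bullet> (B *v w)))" for \<epsilon>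
    using quad_add_scaleR[of B 0 0 v \<epsilon> w] v by (simp add: quad_def c1_def algebra_simps power2_eq_square)
  have "\<forall>\<^sub>F \<epsilon> in at 0. \<epsilon> \<noteq> 0 \<and> \<epsilon> \<noteq> - c1 / (w \<bullet> (B *v w))"
    by (intro eventually_conj eventually_neq_at_within)
  then show ?thesis
  proof (rule eventually_mono)
    fix \<epsilon> :: real
    assume \<epsilon>: "\<epsilon> \<noteq> 0 \<and> \<epsilon> \<noteq> - c1 / (w \<bullet> (B *v w))"
    have "c1 + \<epsilon> * (w \<bullet> (B *v w)) \<noteq> 0"
    proof
      assume "c1 + \<epsilon> * (w \<bullet> (B *v w)) = 0"
      then have "\<epsilon> = - c1 / (w \<bullet> (B *v w))" using w by (simp add: field_simps)
      with \<epsilon> show False by simp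
    qed
    with \<epsilon> show "(v + \<epsilon> *\<^sub>R w) \<bullet> (B *v (v + \<epsilon> *\<^sub>R w)) \<noteq> 0"
      by (simp add: expand)
  qed
qed

lemma approx_joint_convex_quad:
  assumes symB: "symmetric_mat B" and B: "B \<noteq> 0"
  shows "approx_joint_convex (quad A a c) (quad B b d)"
  unfolding approx_joint_convex_def
proof (intro allI impI, elim conjE)
  fix x y and t e :: real
  assume t: "0 \<le> t" "t \<le> 1" and e: "0 < e"
  let ?h = "quad B b d" and ?f = "quad A a c"
  consider "(y - x) \<bullet> (B *v (y - x)) \<noteq> 0 \<or> 0 \<le> (y - x) \<bullet> (A *v (y - x))"
    | "?h x = ?h y"
    | "(y - x) \<bullet> (B *v (y - x)) = 0" "?h x \<noteq> ?h y" "t = 0 \<or> t = 1"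
    | "(y - x) \<bullet> (B *v (y - x)) = 0" "?h x \<noteq> ?h y" "0 < t" "t < 1"
    using t by linarith
  then show "\<exists>z. ?h z = (1 - t) * ?h x + t * ?h y \<and> ?f z \<le> (1 - t) * ?f x + t * ?f y + e"
  proof cases
    case 1
    then obtain z where "?h z = (1 - t) * ?h x + t * ?h y" "?f z \<le> (1 - t) * ?f x + t * ?f y"
      using quad_pair_convex_combination[OF t] by blast
    with e show ?thesis by (intro exI[of _ z]) auto
  next
    case 2
    have "(1 - t) * min (?f x) (?f y) + t * min (?f x) (?f y) \<le> (1 - t) * ?f x + t * ?f y"
      using t by (intro add_mono mult_left_mono) auto
    then have "?f x \<le> (1 - t) * ?f x + t * ?f y + e \<or> ?f y \<le> (1 - t) * ?f x + t * ?f y + e"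
      using e by (simp add: algebra_simps min_def split: if_splits)
    moreover have "?h x = (1 - t) * ?h x + t * ?h y" "?h y = (1 - t) * ?h x + t * ?h y"
      using 2 by (simp_all add: algebra_simps)
    ultimately show ?thesis by blast
  next
    case 3
    then show ?thesis
      using e by (elim disjE) (intro exI[of _ x], simp, intro exI[of _ y], simp)
  next
    case 4
    \<comment> \<open>\<open>h\<close> is affine along the segment; move the endpoint \<open>y\<close> off it in a direction where \<open>B\<close> is anisotropic\<close>
    obtain w where "w \<bullet> (B *v w) \<noteq> 0"
      using symmetric_nonzero_imp_anisotropic[OF symB B] by blast
    from isotropic_perturbation_eventually_anisotropic[OF 4(1) this]
    have nondeg: "\<forall>\<^sub>F \<epsilon> in at 0. (y + \<epsilon> *\<^sub>R w - x) \<bullet> (B *v (y + \<epsilon> *\<^sub>R w - x)) \<noteq> 0"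
      by (simp add: algebra_simps)
    have "((\<lambda>\<epsilon>. y + \<epsilon> *\<^sub>R w) \<longlongrightarrow> y) (at 0)"
      by (auto intro!: tendsto_eq_intros)
    from quad_pair_convex_combination_approx_by_limit[OF this nondeg 4(2-4) e]
    show ?thesis .
  qed
qed

section \<open>Frobenius products of positive semidefinite matrices\<close>

lemma symmetric_mat_iff: "symmetric_mat M \<longleftrightarrow> (\<forall>i j. M $ i $ j = M $ j $ i)"
  by (auto simp: symmetric_mat_def transpose_def vec_eq_iff)

lemma pd_imp_psd: "pd M \<Longrightarrow> psd M"
  unfolding pd_def psd_def by (metis inner_zero_left less_eq_real_def order_refl)

lemma inner_axis_mult_axis: "axis i 1 \<bullet> (P *v axis j 1) = P $ i $ j"
  by (simp add: inner_axis' matrix_vector_mult_basis column_def)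

lemma outer_mult_vector: "outer c c *v x = (c \<bullet> x) *\<^sub>R c"
  by (simp add: vec_eq_iff outer_def inner_vec_def matrix_vector_mult_def sum_distrib_left mult_ac)

lemma frob_add_right: "frob M (X + Y) = frob M X + frob M Y"
  by (simp add: frob_def algebra_simps sum.distrib)

lemma frob_scaleR_right: "frob M (r *\<^sub>R X) = r * frob M X"
  by (simp add: frob_def algebra_simps sum_distrib_left)

lemma frob_uminus_left: "frob (- M) X = - frob M X"
  by (simp add: frob_def sum_negf)

lemma frob_outer: "frob M (outer c c) = c \<bullet> (M *v c)"
  by (simp add: frob_def outer_def inner_vec_def matrix_vector_mult_def sum_distrib_left mult_ac)

lemma psd_diagonal_zero_imp_row_zero:
  assumes P: "psd P" and kk: "P $ k $ k = 0"
  shows "P $ k $ j = 0"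
proof (rule ccontr)
  assume ne: "P $ k $ j \<noteq> 0"
  have sym: "P $ j $ k = P $ k $ j" using P by (simp add: psd_def symmetric_mat_iff)
  have "0 \<le> quad P 0 0 (axis j 1 + s *\<^sub>R axis k 1)" for s
    using P by (simp add: psd_def quad_def)
  then have "0 \<le> P $ j $ j + 2 * s * P $ k $ j" for s
    unfolding quad_add_scaleR using kk sym by (simp add: quad_def inner_axis_mult_axis algebra_simps)
  from this[of "- (P $ j $ j + 1) / (2 * P $ k $ j)"] ne show False
    by (simp add: field_simps)
qed

lemma psd_schur_complement:
  assumes P: "psd P" and kk: "0 < P $ k $ k"
  shows "psd (P - (1 / P $ k $ k) *\<^sub>R outer (column k P) (column k P))"
    (is "psd ?P'")
proof -
  let ?c = "column k P" and ?p = "P $ k $ k"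
  have sym: "\<And>i j. P $ i $ j = P $ j $ i" using P by (simp add: psd_def symmetric_mat_iff)
  have form: "\<And>v. 0 \<le> quad P 0 0 v" using P by (simp add: psd_def quad_def)
  have Pc: "P *v axis k 1 = ?c" by (simp add: matrix_vector_mult_basis)
  have ckk: "axis k 1 \<bullet> ?c = ?p" by (simp add: inner_axis' column_def)
  have "?P' *v x = P *v x - (1 / ?p) *\<^sub>R ((?c \<bullet> x) *\<^sub>R ?c)" for x
    by (simp add: matrix_vector_mult_diff_rdistrib scaleR_matrix_vector_assoc[symmetric] outer_mult_vector)
  then have form': "x \<bullet> (?P' *v x) = x \<bullet> (P *v x) - (x \<bullet> ?c)\<^sup>2 / ?p" for x
    by (simp add: inner_diff_right power2_eq_square inner_commute[of ?c x])
  have "0 \<le> x \<bullet> (?P' *v x)" for x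
  proof -
    \<comment> \<open>the quadratic form of \<open>P\<close> at \<open>x - \<tau> e\<^sub>k\<close>, minimised over \<open>\<tau>\<close>\<close>
    define \<tau> where "\<tau> = (x \<bullet> ?c) / ?p"
    have "axis k 1 \<bullet> (P *v x) = x \<bullet> ?c"
      using P symmetric_mat_inner_commute[of P "axis k 1" x] by (simp add: psd_def Pc)
    then have "quad P 0 0 (x + (- \<tau>) *\<^sub>R axis k 1) = x \<bullet> (P *v x) - 2 * \<tau> * (x \<bullet> ?c) + \<tau>\<^sup>2 * ?p"
      unfolding quad_add_scaleR by (simp add: quad_def inner_axis_mult_axis Pc ckk)
    also have "\<dots> = x \<bullet> (P *v x) - (x \<bullet> ?c)\<^sup>2 / ?p"
      using kk by (simp add: \<tau>_def power2_eq_square field_simps)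
    finally show ?thesis using form[of "x + (- \<tau>) *\<^sub>R axis k 1"] form' by simp
  qed
  moreover have "?P' $ i $ j = ?P' $ j $ i" for i j
    using sym[of i j] by (simp add: outer_def column_def mult.commute)
  then have "symmetric_mat ?P'" by (simp add: symmetric_mat_iff)
  ultimately show ?thesis by (simp add: psd_def)
qed

lemma schur_complement_row_zero:
  assumes "symmetric_mat P" and "P $ k $ k \<noteq> 0" and "i = k \<or> j = k"
  shows "(P - (1 / P $ k $ k) *\<^sub>R outer (column k P) (column k P)) $ i $ j = 0"
  using assms by (auto simp: symmetric_mat_iff outer_def column_def)

lemma frob_nonneg_if_supported:
  fixes M :: "real^'n^'n"
  assumes M: "\<forall>u. 0 \<le> u \<bullet> (M *v u)" and I: "finite I"
  shows "psd P \<Longrightarrow> (\<And>i j. i \<notin> I \<or> j \<notin> I \<Longrightarrow> P $ i $ j = 0) \<Longrightarrow> 0 \<le> frob M P"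
  using I
proof (induction I arbitrary: P rule: finite_induct)
  case empty
  then show ?case by (simp add: frob_def)
next
  case (insert k I)
  have sym: "\<And>i j. P $ i $ j = P $ j $ i" using insert.prems by (simp add: psd_def symmetric_mat_iff)
  have "0 \<le> P $ k $ k"
    using insert.prems(1) inner_axis_mult_axis[of k P k] unfolding psd_def by metis
  then consider "P $ k $ k = 0" | "0 < P $ k $ k" by linarith
  then show ?case
  proof cases
    case 1
    show ?thesis
    proof (rule insert.IH[OF insert.prems(1)])
      show "P $ i $ j = 0" if "i \<notin> I \<or> j \<notin> I" for i j
        using that insert.prems(2)[of i j] psd_diagonal_zero_imp_row_zero[OF insert.prems(1) 1] sym
        by (cases "i = k \<or> j = k") auto
    qed
  next
    case 2
    \<comment> \<open>peel off the rank-one part through row \<open>k\<close>; the Schur complement is supported on \<open>I\<close>\<close>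
    define P' where "P' = P - (1 / P $ k $ k) *\<^sub>R outer (column k P) (column k P)"
    have "0 \<le> frob M P'"
    proof (rule insert.IH)
      show "psd P'" unfolding P'_def using psd_schur_complement[OF insert.prems(1) 2] .
      show "P' $ i $ j = 0" if "i \<notin> I \<or> j \<notin> I" for i j
      proof (cases "i = k \<or> j = k")
        case True
        then show ?thesis
          unfolding P'_def
          by (rule schur_complement_row_zero[rotated 2]) (use insert.prems(1) 2 in \<open>auto simp: psd_def\<close>)
      next
        case False
        then show ?thesis
          using that insert.prems(2)[of i j] insert.prems(2)[of i k] insert.prems(2)[of j k]
          by (auto simp: P'_def outer_def column_def)
      qed
    qed
    moreover have "frob M P = frob M P' + (1 / P $ k $ k) * (column k P \<bullet> (M *v column k P))"
      by (simp add: P'_def frob_add_right[symmetric] frob_scaleR_right[symmetric] frob_outer[symmetric])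
    moreover have "0 \<le> (1 / P $ k $ k) * (column k P \<bullet> (M *v column k P))"
      using 2 M by simp
    ultimately show ?thesis by linarith
  qed
qed

lemma frob_nonneg:
  fixes M :: "real^'n^'n"
  assumes "\<forall>u. 0 \<le> u \<bullet> (M *v u)" and "psd P"
  shows "0 \<le> frob M P"
  using frob_nonneg_if_supported[OF assms(1) finite_class.finite_UNIV assms(2)] by simp

lemma quad_exceeds_if_relaxation_exceeds:
  assumes P: "psd (X - outer x x)" and r: "r < frob B X + 2 * (b \<bullet> x) + d"
  shows "\<exists>z. r < quad B b d z"
proof (rule ccontr)
  assume "\<not> ?thesis"
  then have le: "\<And>z. quad B b d z \<le> r" by (simp add: not_less)
  have "0 \<le> u \<bullet> (- B *v u)" for u
  proof -
    have "0 \<le> (- (u \<bullet> (B *v u))) * s\<^sup>2 + (- 2 * (b \<bullet> u)) * s + (r - d)" for s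
      using le[of "s *\<^sub>R u"] by (simp add: quad_scaleR)
    then have "0 \<le> - (u \<bullet> (B *v u))"
      by (rule quadratic_nonneg_imp_leading_nonneg)
    then show ?thesis using matrix_vector_mult_diff_rdistrib[of 0 B u] by simp
  qed
  then have "0 \<le> frob (- B) (X - outer x x)"
    using frob_nonneg[OF _ P] by blast
  then have "frob B (X - outer x x) \<le> 0" by (simp add: frob_uminus_left)
  moreover have "frob B X = frob B (X - outer x x) + x \<bullet> (B *v x)"
    using frob_add_right[of B "X - outer x x" "outer x x"] by (simp add: frob_outer)
  ultimately show False using r le[of x] by (simp add: quad_def)
qed

lemma quad_values_around_relaxation:
  assumes "psd (X - outer x x)" and "\<alpha> < frob B X + 2 * (b \<bullet> x) + d" "frob B X + 2 * (b \<bullet> x) + d < \<beta>"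
  shows "\<exists>z. \<alpha> < quad B b d z" "\<exists>z. quad B b d z < \<beta>"
proof -
  show "\<exists>z. \<alpha> < quad B b d z" using quad_exceeds_if_relaxation_exceeds assms(1,2) .
  have "\<exists>z. - \<beta> < quad (- B) (- b) (- d) z"
    using assms(1,3) by (intro quad_exceeds_if_relaxation_exceeds) (auto simp: frob_uminus_left)
  then show "\<exists>z. quad B b d z < \<beta>" by (auto simp: quad_uminus)
qed

section \<open>Separation and the Lagrange multiplier\<close>

lemma convex_strict_epigraph_image:
  assumes "approx_joint_convex f h"
  shows "convex {(f x + r, h x) |x r. 0 < r}"
proof (rule convexI)
  fix p1 p2 and u v :: real
  assume "p1 \<in> {(f x + r, h x) |x r. 0 < r}" "p2 \<in> {(f x + r, h x) |x r. 0 < r}"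
    and u: "0 \<le> u" and v: "0 \<le> v" and uv: "u + v = 1"
  then obtain x y r1 r2 where r: "0 < r1" "0 < r2"
    and p: "p1 = (f x + r1, h x)" "p2 = (f y + r2, h y)" by blast
  \<comment> \<open>half of the averaged slack absorbs the error of the approximate convex combination\<close>
  obtain e where e_def: "u * r1 + v * r2 = 2 * e"
    by (metis field_sum_of_halves mult_2)
  have "0 < u * r1 + v * r2"
    using r u v uv by (cases "u = 0") (auto intro: add_pos_nonneg)
  then have e: "0 < e" by (simp add: e_def)
  obtain z where hz: "h z = (1 - v) * h x + v * h y" and fz: "f z \<le> (1 - v) * f x + v * f y + e"
    using assms e v uv u unfolding approx_joint_convex_def by (metis le_add_same_cancel2)
  have u: "u = 1 - v" using uv by simp
  have "u * (f x + r1) + v * (f y + r2) = (u * f x + v * f y) + (u * r1 + v * r2)"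
    by (simp add: algebra_simps)
  also have "\<dots> = (1 - v) * f x + v * f y + 2 * e"
    using e_def u by simp
  finally have "0 < u * (f x + r1) + v * (f y + r2) - f z"
    using fz e by linarith
  moreover have "u *\<^sub>R p1 + v *\<^sub>R p2 = (f z + (u * (f x + r1) + v * (f y + r2) - f z), h z)"
    by (simp add: p u hz)
  ultimately show "u *\<^sub>R p1 + v *\<^sub>R p2 \<in> {(f x + r, h x) |x r. 0 < r}" by blast
qed

lemma separating_line_strict_epigraph_slab:
  assumes convex: "approx_joint_convex f h" and bounded: "\<And>x. \<alpha> \<le> h x \<Longrightarrow> h x \<le> \<beta> \<Longrightarrow> L \<le> f x"
    and \<alpha>\<beta>: "\<alpha> \<le> \<beta>"
  obtains p q b0 where "(p, q) \<noteq> 0"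
    and "\<And>x r. 0 < r \<Longrightarrow> p * (f x + r) + q * h x \<le> b0"
    and "\<And>u v. u < L \<Longrightarrow> \<alpha> \<le> v \<Longrightarrow> v \<le> \<beta> \<Longrightarrow> b0 \<le> p * u + q * v"
proof -
  let ?S = "{(f x + r, h x) |x r. 0 < r}" and ?K = "{..<L} \<times> {\<alpha>..\<beta>}"
  have "convex ?K" by (simp add: convex_Times)
  moreover have "?S \<noteq> {}" "?K \<noteq> {}" using \<alpha>\<beta> by (auto intro: exI[of _ "1::real"])
  moreover have "?S \<inter> ?K = {}" using bounded by force
  ultimately have "\<exists>w b0. w \<noteq> 0 \<and> (\<forall>p\<in>?S. w \<bullet> p \<le> b0) \<and> (\<forall>p\<in>?K. b0 \<le> w \<bullet> p)"
    by (intro separating_hyperplane_sets convex_strict_epigraph_image[OF convex])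
  then obtain w b0 where "w \<noteq> 0" "\<forall>p\<in>?S. w \<bullet> p \<le> b0" "\<forall>p\<in>?K. b0 \<le> w \<bullet> p"
    by blast
  then show ?thesis
    by (intro that[of "fst w" "snd w" b0]) (auto simp: inner_prod_def)
qed

lemma lagrange_multiplier_for_slab:
  assumes convex: "approx_joint_convex f h" and bounded: "\<And>x. \<alpha> \<le> h x \<Longrightarrow> h x \<le> \<beta> \<Longrightarrow> L \<le> f x"
    and \<alpha>\<beta>: "\<alpha> \<le> \<beta>" and x0: "\<alpha> < h x0" and x1: "h x1 < \<beta>"
  shows "\<exists>\<mu> L'. \<forall>x. L' \<le> f x + \<mu> * h x"
proof -
  obtain p q b0 where nz: "(p, q) \<noteq> 0"
    and S: "\<And>x r. 0 < r \<Longrightarrow> p * (f x + r) + q * h x \<le> b0"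
    and K: "\<And>u v. u < L \<Longrightarrow> \<alpha> \<le> v \<Longrightarrow> v \<le> \<beta> \<Longrightarrow> b0 \<le> p * u + q * v"
    using separating_line_strict_epigraph_slab[OF convex bounded \<alpha>\<beta>] by blast
  have "p \<le> 0"
  proof (rule ccontr)
    assume "\<not> p \<le> 0"
    define r where "r = (\<bar>b0 - p * f x0 - q * h x0\<bar> + 1) / p"
    have "p * r = \<bar>b0 - p * f x0 - q * h x0\<bar> + 1"
      using \<open>\<not> p \<le> 0\<close> by (simp add: r_def)
    then have "p * (f x0 + r) = p * f x0 + \<bar>b0 - p * f x0 - q * h x0\<bar> + 1"
      by (simp add: distrib_left)
    moreover have "0 < r" using \<open>\<not> p \<le> 0\<close> by (simp add: r_def add_pos_nonneg)
    ultimately show False using S[of r x0] abs_ge_self[of "b0 - p * f x0 - q * h x0"] by linarith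
  qed
  then consider "p < 0" | "p = 0" "0 < q" | "p = 0" "q < 0"
    using nz unfolding zero_prod_def by (metis less_eq_real_def linorder_neqE_linordered_idom)
  then show ?thesis
  proof cases
    case 1
    \<comment> \<open>a non-vertical separating line: its slope is the multiplier\<close>
    have "b0 / p - 1 \<le> f x + q / p * h x" for x
    proof -
      have "b0 / p \<le> (p * (f x + 1) + q * h x) / p"
        using S[of 1 x] 1 by (simp add: divide_right_mono_neg)
      also have "\<dots> = f x + 1 + q / p * h x"
        using 1 by (simp add: add_divide_distrib)
      finally show ?thesis by simp
    qed
    then show ?thesis by blast
  next
    case 2
    \<comment> \<open>a vertical line would put the whole range of \<open>h\<close> below \<open>\<alpha>\<close>\<close>
    have "q * h x0 \<le> b0" "b0 \<le> q * \<alpha>" using S[of 1 x0] K[of "L - 1" \<alpha>] 2 \<alpha>\<beta> by simp_all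
    then show ?thesis using 2 x0 by (metis order_trans mult_le_cancel_left_pos not_le)
  next
    case 3
    have "q * h x1 \<le> b0" "b0 \<le> q * \<beta>" using S[of 1 x1] K[of "L - 1" \<beta>] 3 \<alpha>\<beta> by simp_all
    then show ?thesis using 3 x1 by (metis order_trans mult_le_cancel_left_neg not_le)
  qed
qed

lemma bounded_below_on_slab_if_lagrangian_bounded:
  fixes f h :: "'a \<Rightarrow> real"
  assumes "\<And>x. L \<le> f x + \<mu> * h x"
  shows "\<exists>L'. \<forall>x. \<alpha> \<le> h x \<and> h x \<le> \<beta> \<longrightarrow> L' \<le> f x"
proof -
  have "L - \<bar>\<mu>\<bar> * (\<bar>\<alpha>\<bar> + \<bar>\<beta>\<bar>) \<le> f x" if "\<alpha> \<le> h x" "h x \<le> \<beta>" for x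
  proof -
    have "\<bar>\<mu> * h x\<bar> \<le> \<bar>\<mu>\<bar> * (\<bar>\<alpha>\<bar> + \<bar>\<beta>\<bar>)"
      using that by (simp add: abs_mult mult_left_mono)
    then show ?thesis using assms[of x] by linarith
  qed
  then show ?thesis by blast
qed

section \<open>Homogenisation\<close>

lemma sum_UNIV_option: "(\<Sum>i\<in>UNIV. g i) = g None + (\<Sum>i\<in>UNIV. g (Some i))"
  for g :: "'n::finite option \<Rightarrow> 'b::comm_monoid_add"
  by (simp add: UNIV_option_conv sum.reindex)

lemma inner_block_mat_mult:
  fixes y :: "real^('n::finite option)"
  defines "x \<equiv> \<chi> i. y $ Some i" and "t \<equiv> y $ None"
  shows "y \<bullet> (block_mat M m s *v y) = x \<bullet> (M *v x) + 2 * t * (m \<bullet> x) + s * t\<^sup>2"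
proof -
  have "(block_mat M m s *v y) $ None = s * t + m \<bullet> x"
    by (simp add: matrix_vector_mult_def sum_UNIV_option block_mat_def inner_vec_def x_def t_def
        mult.commute)
  moreover have "(block_mat M m s *v y) $ Some i = (M *v x) $ i + m $ i * t" for i
    by (simp add: matrix_vector_mult_def sum_UNIV_option block_mat_def x_def t_def mult.commute)
  ultimately have "y \<bullet> (block_mat M m s *v y) = t * (s * t + m \<bullet> x) + (\<Sum>i\<in>UNIV. x $ i * ((M *v x) $ i + m $ i * t))"
    by (simp add: inner_vec_def sum_UNIV_option x_def t_def)
  also have "\<dots> = x \<bullet> (M *v x) + 2 * t * (m \<bullet> x) + s * t\<^sup>2"
    by (simp add: inner_vec_def algebra_simps sum.distrib sum_distrib_left power2_eq_square)
  finally show ?thesis .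
qed

lemma symmetric_block_mat: "symmetric_mat M \<Longrightarrow> symmetric_mat (block_mat M m s)"
  unfolding symmetric_mat_iff by (auto simp: block_mat_def split: option.split)

lemma psd_block_mat_iff:
  assumes "symmetric_mat M"
  shows "psd (block_mat M m s) \<longleftrightarrow> (\<forall>x. 0 \<le> quad M m s x)"
proof
  assume psd: "psd (block_mat M m s)"
  show "\<forall>x. 0 \<le> quad M m s x"
  proof
    fix x :: "real^'a"
    define y :: "real^('a option)" where "y = (\<chi> i. case i of None \<Rightarrow> 1 | Some i \<Rightarrow> x $ i)"
    have "(\<chi> i. y $ Some i) = x" "y $ None = 1" by (simp_all add: y_def vec_eq_iff)
    moreover have "0 \<le> y \<bullet> (block_mat M m s *v y)" using psd by (simp add: psd_def)
    ultimately show "0 \<le> quad M m s x"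
      using inner_block_mat_mult[of y M m s] by (simp add: quad_def)
  qed
next
  assume nonneg: "\<forall>x. 0 \<le> quad M m s x"
  \<comment> \<open>homogenisation: the form at \<open>(x, t)\<close> is \<open>t\<^sup>2 quad M m s (x / t)\<close>, or a limit of such if \<open>t = 0\<close>\<close>
  have "0 \<le> x \<bullet> (M *v x) + 2 * t * (m \<bullet> x) + s * t\<^sup>2" for x t
  proof (cases "t = 0")
    case True
    have "0 \<le> (x \<bullet> (M *v x)) * l\<^sup>2 + 2 * (m \<bullet> x) * l + s" for l
      using nonneg quad_scaleR[of M m s l x] by metis
    then have "0 \<le> x \<bullet> (M *v x)" by (rule quadratic_nonneg_imp_leading_nonneg)
    then show ?thesis using True by simp
  next
    case False
    have "0 \<le> quad M m s ((1 / t) *\<^sub>R x)" using nonneg by blast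
    also have "\<dots> = (x \<bullet> (M *v x) + 2 * t * (m \<bullet> x) + s * t\<^sup>2) / t\<^sup>2"
      using False by (simp add: quad_def matrix_vector_mult_scaleR field_simps power2_eq_square)
    finally show ?thesis using False by (simp add: zero_le_divide_iff)
  qed
  then show "psd (block_mat M m s)"
    using assms by (simp add: psd_def symmetric_block_mat inner_block_mat_mult)
qed

lemma psd_block_lagrangian_iff:
  assumes "symmetric_mat A" "symmetric_mat B"
  shows "psd (block_mat (A + \<mu> *\<^sub>R B) (a + \<mu> *\<^sub>R b) s) \<longleftrightarrow>
    (\<forall>x. c + \<mu> * d - s \<le> quad A a c x + \<mu> * quad B b d x)"
proof -
  have "symmetric_mat (A + \<mu> *\<^sub>R B)" using assms by (simp add: symmetric_mat_iff)
  moreover have "0 \<le> quad A a c x + \<mu> * quad B b d x + (s - c - \<mu> * d) \<longleftrightarrow>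
      c + \<mu> * d - s \<le> quad A a c x + \<mu> * quad B b d x" for x
    by linarith
  ultimately show ?thesis by (simp add: psd_block_mat_iff quad_lagrangian[where c = c and d = d])
qed

theorem corollary1:
  fixes A B :: "real^'n^'n" and a b :: "real^'n" and c d \<alpha> \<beta> :: real
    and f h :: "real^'n \<Rightarrow> real"
  assumes symA: "symmetric_mat A" and symB: "symmetric_mat B"
    and \<alpha>\<beta>: "\<alpha> \<le> \<beta>"
    and f_def: "\<And>x. f x = x \<bullet> (A *v x) + 2 * (a \<bullet> x) + c"
    and h_def: "\<And>x. h x = x \<bullet> (B *v x) + 2 * (b \<bullet> x) + d"
    and B_nz: "B \<noteq> 0"
    and slater: "\<exists>xh Xh. symmetric_mat Xh \<and> pd (Xh - outer xh xh) \<and>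
                   \<alpha> < frob B Xh + 2 * (b \<bullet> xh) + d \<and> frob B Xh + 2 * (b \<bullet> xh) + d < \<beta>"
  shows "(\<exists>L. \<forall>x. \<alpha> \<le> h x \<and> h x \<le> \<beta> \<longrightarrow> L \<le> f x) \<longleftrightarrow>
         (\<exists>\<mu> s. psd (block_mat (A + \<mu> *\<^sub>R B) (a + \<mu> *\<^sub>R b) s))"
proof -
  have f: "f = quad A a c" and h: "h = quad B b d" by (simp_all add: fun_eq_iff f_def h_def quad_def)
  note dual_feasible =
    psd_block_lagrangian_iff[OF symA symB, where a = a and b = b and c = c and d = d, folded f h]
  show ?thesis
  proof
    assume "\<exists>L. \<forall>x. \<alpha> \<le> h x \<and> h x \<le> \<beta> \<longrightarrow> L \<le> f x"
    then obtain L where bounded: "\<And>x. \<alpha> \<le> h x \<Longrightarrow> h x \<le> \<beta> \<Longrightarrow> L \<le> f x" by blast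
    obtain xh Xh where "psd (Xh - outer xh xh)"
      and "\<alpha> < frob B Xh + 2 * (b \<bullet> xh) + d" "frob B Xh + 2 * (b \<bullet> xh) + d < \<beta>"
      using slater pd_imp_psd by blast
    from quad_values_around_relaxation[OF this] obtain x0 x1 where x0: "\<alpha> < h x0" and x1: "h x1 < \<beta>"
      unfolding h by blast
    have convex: "approx_joint_convex f h"
      unfolding f h by (rule approx_joint_convex_quad[OF symB B_nz])
    obtain \<mu> L' where "\<forall>x. L' \<le> f x + \<mu> * h x"
      using lagrange_multiplier_for_slab[OF convex bounded \<alpha>\<beta> x0 x1] by blast
    then show "\<exists>\<mu> s. psd (block_mat (A + \<mu> *\<^sub>R B) (a + \<mu> *\<^sub>R b) s)"
      using dual_feasible[where \<mu> = \<mu> and s = "c + \<mu> * d - L'"] by auto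
  next
    assume "\<exists>\<mu> s. psd (block_mat (A + \<mu> *\<^sub>R B) (a + \<mu> *\<^sub>R b) s)"
    then obtain \<mu> s where "\<And>x. c + \<mu> * d - s \<le> f x + \<mu> * h x" using dual_feasible by blast
    then show "\<exists>L. \<forall>x. \<alpha> \<le> h x \<and> h x \<le> \<beta> \<longrightarrow> L \<le> f x"
      by (rule bounded_below_on_slab_if_lagrangian_bounded)
  qed
qed

end
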